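(* $\mathrm{Log}_{<1}(\mathbb{R})\not\subseteq\mathrm{Log}_{<1}(\mathbb{Q})$.
   Context: Modal formulas are built from a countable set of propositional variables using $\bot$, $\to$ and one unary modality $\lozenge$. A frame is a pair $(X,R)$; a valuation assigns subsets of $X$ to variables; $x\models\lozenge\varphi$ iff there is $y$ with $xRy$ and $y\models\varphi$. A formula is valid in a frame if true at every point under every valuation. For a metric space $(X,d)$, $\mathrm{Log}_{<1}(X)$ is the set of modal formulas valid in the frame $(X,R_{<1})$, where $xR_{<1}y$ iff $d(x,y)<1$. $\mathbb{R}$ and $\mathbb{Q}$ carry the metric $d(x,y)=|x-y|$. *)

theory Defs
  imports "HOL-Analysis.Analysis"
begin

datatype fm = Var nat | Bot | Imp fm fm | Dia fm

fun sat :: "'a set \<Rightarrow> ('a \<Rightarrow> 'a \<Rightarrow> bool) \<Rightarrow> (nat \<Rightarrow> 'a set) \<Rightarrow> 'a \<Rightarrow> fm \<Rightarrow> bool" where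
  "sat W R V x (Var p) = (x \<in> V p)"
| "sat W R V x Bot = False"
| "sat W R V x (Imp \<phi> \<psi>) = (sat W R V x \<phi> \<longrightarrow> sat W R V x \<psi>)"
| "sat W R V x (Dia \<phi>) = (\<exists>y\<in>W. R x y \<and> sat W R V y \<phi>)"

definition valid_in_frame :: "'a set \<Rightarrow> ('a \<Rightarrow> 'a \<Rightarrow> bool) \<Rightarrow> fm \<Rightarrow> bool" where
  "valid_in_frame W R \<phi> \<longleftrightarrow> (\<forall>V. (\<forall>p. V p \<subseteq> W) \<longrightarrow> (\<forall>x\<in>W. sat W R V x \<phi>))"

definition Log_lt1 :: "'a::metric_space set \<Rightarrow> fm set" where
  "Log_lt1 X = {\<phi>. valid_in_frame X (\<lambda>x y. dist x y < 1) \<phi>}"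

end

theory Submission
  imports Defs
begin

text \<open>The witness is \<open>\<box>(\<box>p \<leftrightarrow> \<diamond>q) \<rightarrow> \<box>\<box>p \<or> \<box>\<not>\<box>p\<close>. In any subspace X of a metric
  space the points where \<open>\<box>p\<close> holds form a relatively closed set and those where \<open>\<diamond>q\<close> holds a
  relatively open one. If the two sets agree on the unit ball around x, their trace on that ball
  is clopen in it, so when the ball is connected \<open>\<box>p\<close> holds everywhere or nowhere on it. Unit
  balls of \<open>\<real>\<close> are connected; those of \<open>\<rat>\<close> are not, and cutting the rationals at an
  irrational point refutes the formula.\<close>

definition Neg :: "fm \<Rightarrow> fm" where "Neg a = Imp a Bot"
definition Box :: "fm \<Rightarrow> fm" where "Box a = Neg (Dia (Neg a))"
definition Or :: "fm \<Rightarrow> fm \<Rightarrow> fm" where "Or a b = Imp (Neg a) b"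
definition Iff :: "fm \<Rightarrow> fm \<Rightarrow> fm" where "Iff a b = Neg (Imp (Imp a b) (Neg (Imp b a)))"

lemma sat_Neg [simp]: "sat W R V x (Neg a) \<longleftrightarrow> \<not> sat W R V x a"
  and sat_Box [simp]: "sat W R V x (Box a) \<longleftrightarrow> (\<forall>y\<in>W. R x y \<longrightarrow> sat W R V y a)"
  and sat_Or [simp]: "sat W R V x (Or a b) \<longleftrightarrow> sat W R V x a \<or> sat W R V x b"
  and sat_Iff [simp]: "sat W R V x (Iff a b) \<longleftrightarrow> (sat W R V x a \<longleftrightarrow> sat W R V x b)"
  by (auto simp: Neg_def Box_def Or_def Iff_def)

definition connectedness_axiom :: fm where
  "connectedness_axiom =
     Imp (Box (Iff (Box (Var 0)) (Dia (Var 1))))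
         (Or (Box (Box (Var 0))) (Box (Neg (Box (Var 0)))))"

lemma sat_connectedness_axiom:
  "sat W R V x connectedness_axiom \<longleftrightarrow>
     ((\<forall>y\<in>W. R x y \<longrightarrow> (sat W R V y (Box (Var 0)) \<longleftrightarrow> sat W R V y (Dia (Var 1)))) \<longrightarrow>
      (\<forall>y\<in>W. R x y \<longrightarrow> sat W R V y (Box (Var 0))) \<or>
      (\<forall>y\<in>W. R x y \<longrightarrow> \<not> sat W R V y (Box (Var 0))))"
  by (simp add: connectedness_axiom_def)

lemma connectedness_axiom_valid:
  fixes X :: "'a::metric_space set"
  assumes conn: "\<And>x. x \<in> X \<Longrightarrow> connected (ball x 1 \<inter> X)"
  shows "connectedness_axiom \<in> Log_lt1 X"
  unfolding Log_lt1_def valid_in_frame_def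
proof (intro CollectI allI impI ballI)
  fix V x
  assume "x \<in> X"
  let ?sat = "sat X (\<lambda>x y. dist x y < 1) V"
  define S where "S = ball x 1 \<inter> X"
  define A where "A = (\<Inter>z\<in>X - V 0. - ball z 1)"
  define B where "B = (\<Union>z\<in>X \<inter> V 1. ball z 1)"
  have box_iff: "?sat y (Box (Var 0)) \<longleftrightarrow> y \<in> A" for y
    by (auto simp: A_def dist_commute)
  have dia_iff: "?sat y (Dia (Var 1)) \<longleftrightarrow> y \<in> B" for y
    by (auto simp: B_def dist_commute)
  have S_iff: "y \<in> S \<longleftrightarrow> y \<in> X \<and> dist x y < 1" for y
    by (auto simp: S_def)
  show "?sat x connectedness_axiom"
    unfolding sat_connectedness_axiom
  proof
    assume "\<forall>y\<in>X. dist x y < 1 \<longrightarrow> (?sat y (Box (Var 0)) \<longleftrightarrow> ?sat y (Dia (Var 1)))"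
    then have "S \<inter> A = S \<inter> B"
      using box_iff dia_iff S_iff by blast
    moreover have "closedin (top_of_set S) (S \<inter> A)"
      by (intro closedin_closed_Int) (auto simp: A_def)
    moreover have "openin (top_of_set S) (S \<inter> B)"
      by (intro openin_open_Int) (auto simp: B_def)
    ultimately have "S \<inter> A = {} \<or> S \<inter> A = S"
      using conn[OF \<open>x \<in> X\<close>] unfolding S_def connected_clopen by metis
    then show "(\<forall>y\<in>X. dist x y < 1 \<longrightarrow> ?sat y (Box (Var 0))) \<or>
               (\<forall>y\<in>X. dist x y < 1 \<longrightarrow> \<not> ?sat y (Box (Var 0)))"
      using box_iff S_iff by blast
  qed
qed

lemma irrational_between:
  fixes a b :: real
  assumes "a < b"
  obtains x where "x \<notin> \<rat>" "a < x" "x < b"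
proof -
  have "\<not> {a<..<b} \<subseteq> \<rat>"
    using assms countable_rat countable_subset uncountable_open_interval by blast
  then show ?thesis
    by (auto intro: that)
qed

lemma Rats_ball_below_iff:
  fixes a y :: real
  assumes "a \<notin> \<rat>" "y \<in> \<rat>"
  shows "(\<forall>z\<in>\<rat>. dist y z < 1 \<longrightarrow> z < a + 1) \<longleftrightarrow> y < a"
proof
  assume below: "\<forall>z\<in>\<rat>. dist y z < 1 \<longrightarrow> z < a + 1"
  show "y < a"
  proof (rule ccontr)
    assume "\<not> y < a"
    moreover have "y \<noteq> a"
      using assms by blast
    ultimately have "a < y"
      by simp
    then obtain z where "z \<in> \<rat>" "max (a + 1) (y - 1) < z" "z < y + 1"
      using Rats_dense_in_real[of "max (a + 1) (y - 1)" "y + 1"] by auto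
    with below show False
      by (auto simp: dist_real_def)
  qed
qed (auto simp: dist_real_def)

lemma Rats_ball_meets_below_iff:
  fixes a y :: real
  shows "(\<exists>z\<in>\<rat>. dist y z < 1 \<and> z < a - 1) \<longleftrightarrow> y < a"
proof
  assume "y < a"
  then obtain z where "z \<in> \<rat>" "y - 1 < z" "z < min (y + 1) (a - 1)"
    using Rats_dense_in_real[of "y - 1" "min (y + 1) (a - 1)"] by auto
  then show "\<exists>z\<in>\<rat>. dist y z < 1 \<and> z < a - 1"
    by (intro bexI[of _ z]) (auto simp: dist_real_def)
qed (auto simp: dist_real_def)

lemma connectedness_axiom_not_valid_Rats: "connectedness_axiom \<notin> Log_lt1 (\<rat> :: real set)"
proof
  assume valid: "connectedness_axiom \<in> Log_lt1 (\<rat> :: real set)"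
  obtain a :: real where a: "a \<notin> \<rat>" "0 < a" "a < 1/2"
    using irrational_between[of 0 "1/2"] by auto
  define V :: "nat \<Rightarrow> real set" where
    "V = (\<lambda>n. if n = 0 then {r\<in>\<rat>. r < a + 1} else {r\<in>\<rat>. r < a - 1})"
  let ?sat = "sat \<rat> (\<lambda>x y. dist x y < 1) V"
  \<comment> \<open>Both \<open>\<box>p\<close> and \<open>\<diamond>q\<close> hold at a rational point exactly below the irrational a,
    and the unit ball around 0 contains rationals on both sides of a.\<close>
  have box_iff: "?sat y (Box (Var 0)) \<longleftrightarrow> y < a" if "y \<in> \<rat>" for y
    using Rats_ball_below_iff[OF \<open>a \<notin> \<rat>\<close> that] by (auto simp: V_def)
  have dia_iff: "?sat y (Dia (Var 1)) \<longleftrightarrow> y < a" for y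
    using Rats_ball_meets_below_iff[of y a] by (auto simp: V_def)
  have "?sat 0 connectedness_axiom"
    using valid by (auto simp: Log_lt1_def valid_in_frame_def V_def)
  moreover have "\<forall>y\<in>\<rat>. dist 0 y < 1 \<longrightarrow> (?sat y (Box (Var 0)) \<longleftrightarrow> ?sat y (Dia (Var 1)))"
    using box_iff dia_iff by blast
  moreover have "1/2 \<in> \<rat>" "dist 0 (1/2 :: real) < 1" "\<not> ?sat (1/2) (Box (Var 0))"
    using a box_iff[of "1/2"] by (auto simp: dist_real_def)
  moreover have "0 \<in> \<rat>" "dist 0 (0 :: real) < 1" "?sat 0 (Box (Var 0))"
    using a box_iff[of 0] by simp_all
  ultimately show False
    unfolding sat_connectedness_axiom by blast
qed

theorem proposition4p9:
  shows "\<not> (Log_lt1 (UNIV :: real set) \<subseteq> Log_lt1 (\<rat> :: real set))"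
  using connectedness_axiom_valid[of "UNIV :: real set"] connectedness_axiom_not_valid_Rats
  by auto

end
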